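(* Let $c,C>0$ be arbitrary and define, for functions $g$ on $(0,\infty)$, the linear operator \[ L(g)(r):=c\int_{r}^\infty\frac{g(s)}{s}\, ds-C\Big(g(r)+\frac{1}{r}\int_0^r g(s)\, ds+r\int_r^\infty \frac{g(s)}{s^2}\, ds\Big). \] Then there exists a function $W_2$ that is positive and integrable on $[0,\infty)$ such that $W_1:=L^*(W_2)>0$ on $(0,\infty)$, where $L^*$ denotes the adjoint of $L$ with respect to the $L^2([0,\infty),dr)$ pairing.
   Context: Explicitly, the adjoint is $L^*(h)(r)=\frac{c}{r}\int_0^r h(s)\,ds-C\Big(h(r)+\int_r^\infty\frac{h(s)}{s}\,ds+\frac{1}{r^2}\int_0^r s\,h(s)\,ds\Big)$, characterized by $\int_0^\infty L(g)\,h\,dr=\int_0^\infty g\,L^*(h)\,dr$. *)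

theory Defs
  imports "HOL-Analysis.Analysis"
begin

definition L_op :: "real \<Rightarrow> real \<Rightarrow> (real \<Rightarrow> real) \<Rightarrow> real \<Rightarrow> real" where
  "L_op c C g r =
     c * (\<integral>s\<in>{r<..}. g s / s \<partial>lborel)
     - C * (g r + (1 / r) * (\<integral>s\<in>{0..r}. g s \<partial>lborel)
                + r * (\<integral>s\<in>{r<..}. g s / s\<^sup>2 \<partial>lborel))"

text \<open>Its L2 adjoint, explicitly as in the paper.\<close>
definition L_adj :: "real \<Rightarrow> real \<Rightarrow> (real \<Rightarrow> real) \<Rightarrow> real \<Rightarrow> real" where
  "L_adj c C h r =
     (c / r) * (\<integral>s\<in>{0..r}. h s \<partial>lborel)
     - C * (h r + (\<integral>s\<in>{r<..}. h s / s \<partial>lborel)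
                + (1 / r\<^sup>2) * (\<integral>s\<in>{0..r}. s * h s \<partial>lborel))"

end

theory Submission
  imports Defs
begin

text \<open>The witness \<open>weight a\<close> behaves like \<open>s powr (-a)\<close> on \<open>(0, 1]\<close> and like \<open>s powr (-3)\<close>
  beyond, for some \<open>a < 1\<close> close to 1. Measured against \<open>envelope a r\<close>, the three terms of the
  adjoint with coefficient \<open>C\<close> are at most 4 times the envelope, uniformly in \<open>a \<ge> 1/2\<close>,
  whereas the averaging term \<open>c / r\<close> times the integral of the weight over \<open>[0, r]\<close> is at
  least \<open>c / (1 - a)\<close> times the envelope, since \<open>s powr (-a)\<close> integrates over \<open>[0, r]\<close> to
  \<open>r powr (1 - a) / (1 - a)\<close>. Choosing \<open>1 - a \<le> c / (8 * C)\<close> lets the averaging term win.\<close>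

lemma has_integral_nonneg_set_lborel:
  fixes f :: "'a::euclidean_space \<Rightarrow> real"
  assumes f: "(f has_integral I) S" and nonneg: "\<And>x. x \<in> S \<Longrightarrow> 0 \<le> f x"
    and meas: "f \<in> borel_measurable borel" and S: "S \<in> sets borel"
  shows "set_integrable lborel S f" "(LINT x:S|lborel. f x) = I"
proof -
  have "integrable lebesgue (\<lambda>x. indicator S x *\<^sub>R f x)"
    using nonnegative_absolutely_integrable_1[of f S] f nonneg
    by (auto simp: integrable_on_def set_integrable_def)
  moreover have "(\<lambda>x. indicator S x *\<^sub>R f x) \<in> borel_measurable lborel"
    using meas S by measurable
  ultimately show integrable: "set_integrable lborel S f"
    unfolding set_integrable_def using integrable_completion by blast
  show "(LINT x:S|lborel. f x) = I"
    using set_borel_integral_eq_integral(2)[OF integrable] f by (simp add: integral_unique)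
qed

lemma set_lborel_integral_le_has_integral:
  fixes f g :: "'a::euclidean_space \<Rightarrow> real"
  assumes g: "(g has_integral I) S" and bounds: "\<And>x. x \<in> S \<Longrightarrow> 0 \<le> f x \<and> f x \<le> g x"
    and f_meas: "f \<in> borel_measurable borel" and g_meas: "g \<in> borel_measurable borel"
    and S: "S \<in> sets borel"
  shows "(LINT x:S|lborel. f x) \<le> I"
proof -
  have g_int: "set_integrable lborel S g" and g_val: "(LINT x:S|lborel. g x) = I"
    using has_integral_nonneg_set_lborel[OF g _ g_meas S] bounds by force+
  have "set_integrable lborel S f"
  proof (rule set_integrable_bound[OF g_int])
    show "set_borel_measurable lborel S f"
      using f_meas S by (simp add: set_borel_measurable_def)
    show "AE x in lborel. x \<in> S \<longrightarrow> norm (f x) \<le> norm (g x)"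
      using bounds by (auto intro!: AE_I2 intro: order_trans[OF _ abs_ge_self])
  qed
  then show ?thesis
    using set_integral_mono[OF _ g_int] bounds g_val by force
qed

lemma set_integral_greaterThan_le_powr:
  fixes f :: "real \<Rightarrow> real"
  assumes "e < -1" "r > 0" "f \<in> borel_measurable borel"
    and "\<And>x. x > r \<Longrightarrow> 0 \<le> f x \<and> f x \<le> x powr e"
  shows "(LINT x:{r<..}|lborel. f x) \<le> - (r powr (e + 1) / (e + 1))"
proof -
  have "((\<lambda>x. x powr e) has_integral -(r powr (e + 1)) / (e + 1)) {r<..}"
    using has_integral_powr_to_inf[OF assms(1,2)]
    by (rule has_integral_spike_set_eq[THEN iffD1, rotated 2])
       (rule negligible_subset[of "{r}"]; force)+
  from set_lborel_integral_le_has_integral[OF this] show ?thesis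
    using assms(3,4) by auto
qed

lemma set_integral_atLeastAtMost_le_powr:
  fixes f :: "real \<Rightarrow> real"
  assumes "e > -1" "r \<ge> 0" "f \<in> borel_measurable borel"
    and "\<And>x. 0 \<le> x \<Longrightarrow> x \<le> r \<Longrightarrow> 0 \<le> f x \<and> f x \<le> x powr e"
  shows "(LINT x:{0..r}|lborel. f x) \<le> r powr (e + 1) / (e + 1)"
  using set_lborel_integral_le_has_integral[OF has_integral_powr_from_0[OF assms(1,2)]] assms(3,4)
  by auto

definition weight :: "real \<Rightarrow> real \<Rightarrow> real" where
  "weight a s = (if s \<le> 0 then 1 else if s \<le> 1 then s powr (-a) else s powr (-3))"

definition envelope :: "real \<Rightarrow> real \<Rightarrow> real" where
  "envelope a r = (if r \<le> 1 then r powr (-a) else 1 / r)"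

lemma weight_pos: "weight a s > 0"
  by (simp add: weight_def)

lemma envelope_pos: "r > 0 \<Longrightarrow> envelope a r > 0"
  by (simp add: envelope_def)

lemma borel_measurable_weight: "weight a \<in> borel_measurable borel"
  unfolding weight_def
  by (intro measurable_If powr_real_measurable measurable_const measurable_ident_sets) auto

lemma borel_measurable_weight_divide: "(\<lambda>s. weight a s / s) \<in> borel_measurable borel"
  using borel_measurable_weight by (intro borel_measurable_divide) auto

lemma borel_measurable_mult_weight: "(\<lambda>s. s * weight a s) \<in> borel_measurable borel"
  using borel_measurable_weight by (intro borel_measurable_times) auto

lemma weight_le_powr: "a \<le> 3 \<Longrightarrow> s > 0 \<Longrightarrow> weight a s \<le> s powr (-a)"
  by (auto simp: weight_def intro!: powr_mono)

lemma weight_mult_le_powr: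
  assumes "a \<le> 3" "0 \<le> s"
  shows "s * weight a s \<le> s powr (1 - a)"
proof (cases "s = 0")
  case False
  then have "s * weight a s \<le> s * s powr (-a)"
    using assms weight_le_powr[of a s] by (intro mult_left_mono) auto
  also have "\<dots> = s powr (1 - a)"
    using False assms by (simp add: powr_diff powr_minus divide_inverse)
  finally show ?thesis .
qed simp

lemma weight_mult_le_1:
  assumes "0 \<le> a" "a \<le> 1" "0 \<le> s"
  shows "s * weight a s \<le> 1"
proof (cases "s \<le> 1")
  case True
  then show ?thesis
    using weight_mult_le_powr[of a s] assms powr_le1[of "1 - a" s] by auto
next
  case False
  have "s * s powr (-3) \<le> s * s powr (-1)"
    using False by (intro mult_left_mono powr_mono) auto
  then show ?thesis
    using False by (simp add: weight_def powr_minus)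
qed

lemma weight_le_envelope:
  assumes "r > 0"
  shows "weight a r \<le> envelope a r"
proof (cases "r \<le> 1")
  case False
  have "r powr (-3) \<le> r powr (-1)"
    using False by (intro powr_mono) auto
  then show ?thesis
    using False by (simp add: weight_def envelope_def powr_minus divide_inverse)
qed (use assms in \<open>simp add: weight_def envelope_def\<close>)

lemma weight_has_integral_atLeastAtMost:
  assumes "a < 1" "0 \<le> r" "r \<le> 1"
  shows "(weight a has_integral r powr (1 - a) / (1 - a)) {0..r}"
proof -
  have "((\<lambda>s. s powr (-a)) has_integral r powr (1 - a) / (1 - a)) {0..r}"
    using has_integral_powr_from_0[of "-a" r] assms by simp
  then show ?thesis
    by (rule has_integral_spike[of "{0}", rotated 2]) (use assms in \<open>auto simp: weight_def\<close>)
qed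

lemma weight_has_integral_atLeast_1: "(weight a has_integral 1 / 2) {1..}"
proof -
  have "((\<lambda>s::real. s powr (-3)) has_integral 1 / 2) {1..}"
    using has_integral_powr_to_inf[of "-3" 1] by simp
  then show ?thesis
    by (rule has_integral_spike[of "{}", rotated 2]) (auto simp: weight_def)
qed

lemma set_integrable_weight:
  assumes "a < 1"
  shows "set_integrable lborel {0..} (weight a)"
proof -
  have "(weight a has_integral 1 / (1 - a) + 1 / 2) ({0..1} \<union> {1..})"
    using weight_has_integral_atLeastAtMost[of a 1] weight_has_integral_atLeast_1 assms
    by (intro has_integral_Un) (auto intro: negligible_subset[of "{1}"])
  moreover have "{0..1} \<union> {1..} = {0::real..}" by auto
  ultimately show ?thesis
    using has_integral_nonneg_set_lborel(1) weight_pos borel_measurable_weight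
    by (metis less_imp_le sets_lborel atLeast_borel)
qed

lemma weight_average_ge_envelope:
  assumes "a < 1" "r > 0"
  shows "envelope a r / (1 - a) \<le> (1 / r) * (LINT s:{0..r}|lborel. weight a s)"
proof (cases "r \<le> 1")
  case True
  have "(LINT s:{0..r}|lborel. weight a s) = r powr (1 - a) / (1 - a)"
    using has_integral_nonneg_set_lborel(2)[OF weight_has_integral_atLeastAtMost] assms True
      weight_pos borel_measurable_weight by (simp add: less_imp_le)
  moreover have "r powr (1 - a) = r * r powr (-a)"
    using assms by (simp add: powr_diff powr_minus field_simps)
  ultimately show ?thesis
    using True assms by (simp add: envelope_def)
next
  case False
  have integrable: "set_integrable lborel {0..t} (weight a)" for t
    by (rule set_integrable_subset[OF set_integrable_weight[OF assms(1)]]) auto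
  have "1 / (1 - a) = integral {0..1} (weight a)"
    using weight_has_integral_atLeastAtMost[of a 1] assms by (simp add: integral_unique)
  also have "\<dots> \<le> integral {0..r} (weight a)"
    using False set_borel_integral_eq_integral(1)[OF integrable] weight_pos
    by (intro integral_subset_le) (auto simp: less_imp_le)
  also have "\<dots> = (LINT s:{0..r}|lborel. weight a s)"
    using set_borel_integral_eq_integral(2)[OF integrable] by simp
  finally have "(1 / r) * (1 / (1 - a)) \<le> (1 / r) * (LINT s:{0..r}|lborel. weight a s)"
    using False by (intro mult_left_mono) auto
  then show ?thesis
    using False by (simp add: envelope_def)
qed

lemma weight_tail_le_envelope:
  assumes "1 / 2 \<le> a" "a < 1" "r > 0"
  shows "(LINT s:{r<..}|lborel. weight a s / s) \<le> 2 * envelope a r"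
proof (cases "r \<le> 1")
  case True
  have "(LINT s:{r<..}|lborel. weight a s / s) \<le> - (r powr (-a - 1 + 1) / (-a - 1 + 1))"
  proof (rule set_integral_greaterThan_le_powr)
    fix s :: real assume "s > r"
    then show "0 \<le> weight a s / s \<and> weight a s / s \<le> s powr (-a - 1)"
      using assms weight_pos[of a s] weight_le_powr[of a s]
      by (simp add: powr_diff[of s "-a" 1] less_imp_le divide_right_mono)
  qed (use assms in \<open>auto simp: borel_measurable_weight_divide\<close>)
  also have "\<dots> \<le> 2 * r powr (-a)"
    using assms by (simp add: field_simps)
  finally show ?thesis
    using True by (simp add: envelope_def)
next
  case False
  have "(LINT s:{r<..}|lborel. weight a s / s) \<le> - (r powr (-2 + 1) / (-2 + 1))"
  proof (rule set_integral_greaterThan_le_powr)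
    fix s :: real assume "s > r"
    then have "weight a s / s \<le> 1 / s\<^sup>2"
      using False assms weight_mult_le_1[of a s] by (simp add: field_simps power2_eq_square)
    moreover have "s powr (-2) = 1 / s\<^sup>2"
      using False \<open>s > r\<close> by (simp add: powr_minus_divide powr_realpow)
    ultimately show "0 \<le> weight a s / s \<and> weight a s / s \<le> s powr (-2)"
      using False \<open>s > r\<close> weight_pos[of a s] by simp
  qed (use assms in \<open>auto simp: borel_measurable_weight_divide\<close>)
  then show ?thesis
    using False by (auto simp: envelope_def intro: order_trans[OF _ divide_right_mono])
qed

lemma weight_moment_le_envelope:
  assumes "0 \<le> a" "a < 1" "r > 0"
  shows "(1 / r\<^sup>2) * (LINT s:{0..r}|lborel. s * weight a s) \<le> envelope a r"
proof (cases "r \<le> 1")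
  case True
  have "(LINT s:{0..r}|lborel. s * weight a s) \<le> r powr (1 - a + 1) / (1 - a + 1)"
  proof (rule set_integral_atLeastAtMost_le_powr)
    fix s :: real assume "0 \<le> s" "s \<le> r"
    then show "0 \<le> s * weight a s \<and> s * weight a s \<le> s powr (1 - a)"
      using assms weight_pos[of a s] weight_mult_le_powr[of a s] by simp
  qed (use assms in \<open>auto simp: borel_measurable_mult_weight\<close>)
  also have "\<dots> \<le> r\<^sup>2 * r powr (-a)"
    using assms by (simp add: powr_add powr_diff powr_minus field_simps power2_eq_square)
  finally show ?thesis
    using True assms by (simp add: envelope_def field_simps)
next
  case False
  have "(LINT s:{0..r}|lborel. s * weight a s) \<le> r powr (0 + 1) / (0 + 1)"
  proof (rule set_integral_atLeastAtMost_le_powr)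
    fix s :: real assume "0 \<le> s" "s \<le> r"
    then show "0 \<le> s * weight a s \<and> s * weight a s \<le> s powr 0"
      using assms weight_pos[of a s] weight_mult_le_1[of a s] by (cases "s = 0") auto
  qed (use assms in \<open>auto simp: borel_measurable_mult_weight\<close>)
  then show ?thesis
    using False by (simp add: envelope_def field_simps power2_eq_square)
qed

theorem lemma3p5:
  fixes c C :: real
  assumes "c > 0" and "C > 0"
  shows "\<exists>W2 :: real \<Rightarrow> real.
           (\<forall>s\<ge>0. W2 s > 0) \<and>
           set_integrable lborel {0..} W2 \<and>
           (\<forall>r>0. L_adj c C W2 r > 0)"
proof -
  define a where "a = max (1 / 2) (1 - c / (8 * C))"
  have a: "1 / 2 \<le> a" "a < 1"
    using assms by (auto simp: a_def)
  have "1 - a \<le> c / (8 * C)"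
    by (simp add: a_def)
  then have dominant: "8 * C \<le> c / (1 - a)"
    using a assms by (simp add: field_simps)
  have "L_adj c C (weight a) r > 0" if "r > 0" for r
  proof -
    let ?m = "envelope a r"
    have "c * (?m / (1 - a)) \<le> (c / r) * (LINT s:{0..r}|lborel. weight a s)"
      using mult_left_mono[OF weight_average_ge_envelope[OF a(2) that], of c] assms by simp
    moreover have "weight a r + (LINT s:{r<..}|lborel. weight a s / s)
        + (1 / r\<^sup>2) * (LINT s:{0..r}|lborel. s * weight a s) \<le> 4 * ?m"
      using weight_le_envelope[OF that, of a] weight_tail_le_envelope[OF a that]
        weight_moment_le_envelope[of a r] a that by simp
    moreover have "c * (?m / (1 - a)) - C * (4 * ?m) = (c / (1 - a) - 4 * C) * ?m"
      by (simp add: algebra_simps)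
    moreover have "(c / (1 - a) - 4 * C) * ?m > 0"
      using dominant assms envelope_pos[OF that, of a] by simp
    ultimately show ?thesis
      unfolding L_adj_def using assms(2) by (smt (verit) mult_left_mono)
  qed
  then show ?thesis
    using weight_pos set_integrable_weight[OF a(2)] by blast
qed

end
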